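(* Let $\mathcal{G}$ be a groupoid, $\mathbb{K}$ a field, and $\sigma :\mathcal{G} \times\mathcal{G} \to \mathbb{K}$ a map taking only the values $0$ and $1$, with $\sigma(e,e) = 1$ for all $e \in \mathcal{G}_0$, and such that for all $(x,y) \in \mathrm{dom}\,\sigma$, $$(xy,y^{-1}),\ (y^{-1},x^{-1}),\ (x,d(x)) \in \mathrm{dom}\,\sigma.$$ Let $(a,b),(c,f) \in \mathcal{G}^2$ be such that $\sigma(a,b) = 0$ and $\{ a^{-1}, b \} \subseteq \{ d(c), c^{-1}, f \}$. Then $\sigma(c,f) = 0$.
   Context: A groupoid is a nonempty set $\mathcal{G}$ with a partial associative product, each $g$ having right identity $d(g)=g^{-1}g$, left identity $r(g)=gg^{-1}$ and inverse $g^{-1}$; $xy$ is defined iff $d(x)=r(y)$; $\mathcal{G}_0$ is the set of identities and $\mathcal{G}^2$ the set of composable pairs. For such $\sigma$, $\mathrm{dom}\,\sigma=\{(x,y)\in\mathcal{G}\times\mathcal{G}:\sigma(x,y)\neq0\}$. *)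

theory Defs
  imports Main
begin

text \<open>A groupoid is given by a carrier set G, a product m (meaningful only on
composable pairs) and an inverse map i.\<close>

definition gd :: "('a \<Rightarrow> 'a \<Rightarrow> 'a) \<Rightarrow> ('a \<Rightarrow> 'a) \<Rightarrow> 'a \<Rightarrow> 'a" where
  "gd m i x = m (i x) x"

definition gr :: "('a \<Rightarrow> 'a \<Rightarrow> 'a) \<Rightarrow> ('a \<Rightarrow> 'a) \<Rightarrow> 'a \<Rightarrow> 'a" where
  "gr m i x = m x (i x)"

definition composable :: "'a set \<Rightarrow> ('a \<Rightarrow> 'a \<Rightarrow> 'a) \<Rightarrow> ('a \<Rightarrow> 'a) \<Rightarrow> ('a \<times> 'a) set" where
  "composable G m i = {(x, y). x \<in> G \<and> y \<in> G \<and> gd m i x = gr m i y}"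

definition units :: "'a set \<Rightarrow> ('a \<Rightarrow> 'a \<Rightarrow> 'a) \<Rightarrow> ('a \<Rightarrow> 'a) \<Rightarrow> 'a set" where
  "units G m i = gd m i ` G"

definition groupoid :: "'a set \<Rightarrow> ('a \<Rightarrow> 'a \<Rightarrow> 'a) \<Rightarrow> ('a \<Rightarrow> 'a) \<Rightarrow> bool" where
  "groupoid G m i \<longleftrightarrow>
     G \<noteq> {} \<and>
     (\<forall>x\<in>G. i x \<in> G \<and> i (i x) = x) \<and>
     (\<forall>x y. (x, y) \<in> composable G m i \<longrightarrow> m x y \<in> G) \<and>
     (\<forall>x y z. (x, y) \<in> composable G m i \<and> (y, z) \<in> composable G m i \<longrightarrow>
        (m x y, z) \<in> composable G m i \<and> (x, m y z) \<in> composable G m i \<and>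
        m (m x y) z = m x (m y z)) \<and>
     (\<forall>x y. (x, y) \<in> composable G m i \<longrightarrow>
        m (i x) (m x y) = y \<and> m (m x y) (i y) = x)"

definition sdom :: "'a set \<Rightarrow> ('a \<Rightarrow> 'a \<Rightarrow> 'k::zero) \<Rightarrow> ('a \<times> 'a) set" where
  "sdom G \<sigma> = {(x, y). x \<in> G \<and> y \<in> G \<and> \<sigma> x y \<noteq> 0}"

end

theory Submission
  imports Defs
begin

text \<open>Write \<open>e = d(c) = r(f)\<close>. Starting from \<open>(c, f) \<in> dom \<sigma>\<close>, the three closure rules
propagate membership to every pair in \<open>{e, c, f\<inverse>} \<times> {e, c\<inverse>, f}\<close>: the unit rule gives
\<open>(c, e)\<close> and \<open>(f\<inverse>, e)\<close>, and from any \<open>(x, d(x))\<close> the inversion and product rules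
reach \<open>(d(x), x\<inverse>)\<close>, \<open>(x\<inverse>, x)\<close> and \<open>(x, x\<inverse>)\<close>. The hypothesis on \<open>{a\<inverse>, b}\<close> says precisely
that \<open>(a, b)\<close> is one of these pairs, so \<open>\<sigma>(a, b) = 0\<close> forces \<open>\<sigma>(c, f) = 0\<close>.\<close>

locale grpd =
  fixes G :: "'a set" and m :: "'a \<Rightarrow> 'a \<Rightarrow> 'a" and i :: "'a \<Rightarrow> 'a"
  assumes is_groupoid: "groupoid G m i"
begin

abbreviation C :: "'a \<Rightarrow> 'a \<Rightarrow> bool" where "C x y \<equiv> (x, y) \<in> composable G m i"
abbreviation d :: "'a \<Rightarrow> 'a" where "d \<equiv> gd m i"
abbreviation r :: "'a \<Rightarrow> 'a" where "r \<equiv> gr m i"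

lemma inv_closed: "x \<in> G \<Longrightarrow> i x \<in> G"
  and inv_inv: "x \<in> G \<Longrightarrow> i (i x) = x"
  using is_groupoid unfolding groupoid_def by simp_all

lemma composableD: "C x y \<Longrightarrow> x \<in> G \<and> y \<in> G \<and> d x = r y"
  unfolding composable_def by simp

lemma composableI: "x \<in> G \<Longrightarrow> y \<in> G \<Longrightarrow> d x = r y \<Longrightarrow> C x y"
  unfolding composable_def by simp

lemma mult_closed: "C x y \<Longrightarrow> m x y \<in> G"
  using is_groupoid unfolding groupoid_def by simp

lemma cancel_left: "C x y \<Longrightarrow> m (i x) (m x y) = y"
  and cancel_right: "C x y \<Longrightarrow> m (m x y) (i y) = x"
  using is_groupoid unfolding groupoid_def by simp_all

lemma composable_assoc:
  "C x y \<Longrightarrow> C y z \<Longrightarrow> C (m x y) z \<and> C x (m y z) \<and> m (m x y) z = m x (m y z)"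
  using is_groupoid unfolding groupoid_def by simp

lemma d_inv: "x \<in> G \<Longrightarrow> d (i x) = r x"
  and r_inv: "x \<in> G \<Longrightarrow> r (i x) = d x"
  unfolding gd_def gr_def by (simp_all add: inv_inv)

lemma composable_inv_left: "x \<in> G \<Longrightarrow> C (i x) x"
  and composable_inv_right: "x \<in> G \<Longrightarrow> C x (i x)"
  by (simp_all add: composableI inv_closed d_inv r_inv)

lemma composable_inv: "C x y \<Longrightarrow> C (i y) (i x)"
  using composableD[of x y] by (intro composableI) (simp_all add: inv_closed d_inv r_inv)

lemma d_closed: "x \<in> G \<Longrightarrow> d x \<in> G"
  using mult_closed[OF composable_inv_left] unfolding gd_def .

lemma mult_d_right: "x \<in> G \<Longrightarrow> m x (d x) = x"
  using cancel_left[OF composable_inv_left] unfolding gd_def by (simp add: inv_inv)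

lemma mult_d_inv: "x \<in> G \<Longrightarrow> m (d x) (i x) = i x"
  using cancel_right[OF composable_inv_left] unfolding gd_def .

lemma composable_d_right: "x \<in> G \<Longrightarrow> C x (d x)"
  using composable_assoc[OF composable_inv_right composable_inv_left] unfolding gd_def by blast

lemma d_idem: "x \<in> G \<Longrightarrow> C (d x) (d x) \<and> m (d x) (d x) = d x"
  using composable_assoc[OF composable_inv_left composable_d_right] mult_d_right
  unfolding gd_def by simp

lemma inv_d: "x \<in> G \<Longrightarrow> i (d x) = d x"
proof -
  assume x: "x \<in> G"
  have "d x = m (i (d x)) (d x)"
    using cancel_left[of "d x" "d x"] d_idem[OF x] by simp
  also have "\<dots> = m (i (d x)) (m (d x) (i (d x)))"
    using composableD[OF composable_d_right[OF x]] unfolding gr_def by simp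
  also have "\<dots> = i (d x)"
    using cancel_left[OF composable_inv_right[OF d_closed[OF x]]] .
  finally show ?thesis by (rule sym)
qed

lemma d_d: "x \<in> G \<Longrightarrow> d (d x) = d x"
  using inv_d d_idem unfolding gd_def by simp

end

locale grpd_closed_pairs = grpd +
  fixes S :: "('a \<times> 'a) set"
  assumes mult_inv_mem: "(x, y) \<in> S \<Longrightarrow> C x y \<Longrightarrow> (m x y, i y) \<in> S"
    and inv_swap_mem: "(x, y) \<in> S \<Longrightarrow> C x y \<Longrightarrow> (i y, i x) \<in> S"
    and d_right_mem: "(x, y) \<in> S \<Longrightarrow> C x y \<Longrightarrow> (x, d x) \<in> S"
begin

lemma inverse_pairs_of_unit_pair:
  assumes x: "x \<in> G" and xd: "(x, d x) \<in> S"
  shows "(d x, i x) \<in> S" "(i x, x) \<in> S"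
proof -
  show dix: "(d x, i x) \<in> S"
    using inv_swap_mem[OF xd composable_d_right[OF x]] by (simp add: inv_d x)
  have "C (d x) (i x)"
    using composable_inv[OF composable_d_right[OF x]] by (simp add: inv_d x)
  from mult_inv_mem[OF dix this] show "(i x, x) \<in> S"
    by (simp add: mult_d_inv inv_inv x)
qed

lemma right_inverse_pair_of_unit_pair:
  assumes x: "x \<in> G" and xd: "(x, d x) \<in> S"
  shows "(x, i x) \<in> S"
proof -
  have "(i x, d (i x)) \<in> S"
    using d_right_mem[OF inverse_pairs_of_unit_pair(2)[OF x xd] composable_inv_left[OF x]] .
  from inverse_pairs_of_unit_pair(2)[OF inv_closed[OF x] this] show ?thesis
    by (simp add: inv_inv x)
qed

lemma product_pairs_mem:
  assumes cf: "(c, f) \<in> S" "C c f"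
  shows "{d c, c, i f} \<times> {d c, i c, f} \<subseteq> S"
proof -
  have c: "c \<in> G" and f: "f \<in> G" and e: "r f = d c"
    using composableD[OF cf(2)] by auto
  have ce: "(c, d c) \<in> S" using d_right_mem[OF cf] .
  have fc: "(i f, i c) \<in> S" using inv_swap_mem[OF cf] .
  have fe: "(i f, d (i f)) \<in> S"
    using d_right_mem[OF fc composable_inv[OF cf(2)]] .
  note C_pairs = inverse_pairs_of_unit_pair(1)[OF c ce] right_inverse_pair_of_unit_pair[OF c ce]
  have F_pairs: "(i f, d c) \<in> S" "(d c, f) \<in> S" "(i f, f) \<in> S"
    using fe inverse_pairs_of_unit_pair(1)[OF inv_closed[OF f] fe]
      right_inverse_pair_of_unit_pair[OF inv_closed[OF f] fe]
    by (simp_all add: d_inv inv_inv f e)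
  have ee: "(d c, d c) \<in> S"
    using d_right_mem[OF C_pairs(1)] composable_inv[OF composable_d_right[OF c]]
    by (simp add: inv_d d_d c)
  show ?thesis
    using cf(1) ce fc C_pairs F_pairs ee by blast
qed

end

theorem mainTheorem10:
  fixes G :: "'a set" and m :: "'a \<Rightarrow> 'a \<Rightarrow> 'a" and i :: "'a \<Rightarrow> 'a"
    and \<sigma> :: "'a \<Rightarrow> 'a \<Rightarrow> 'k::field"
    and a b c f :: 'a
  assumes grp: "groupoid G m i"
    and vals: "\<forall>x\<in>G. \<forall>y\<in>G. \<sigma> x y = 0 \<or> \<sigma> x y = 1"
    and diag: "\<forall>e\<in>units G m i. \<sigma> e e = 1"
    and closed: "\<forall>x y. (x, y) \<in> sdom G \<sigma> \<and> (x, y) \<in> composable G m i \<longrightarrow>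
        (m x y, i y) \<in> sdom G \<sigma> \<and> (i y, i x) \<in> sdom G \<sigma> \<and> (x, gd m i x) \<in> sdom G \<sigma>"
    and ab: "(a, b) \<in> composable G m i"
    and cf: "(c, f) \<in> composable G m i"
    and zero: "\<sigma> a b = 0"
    and sub: "{i a, b} \<subseteq> {gd m i c, i c, f}"
  shows "\<sigma> c f = 0"
proof (rule ccontr)
  assume "\<sigma> c f \<noteq> 0"
  interpret grpd_closed_pairs G m i "sdom G \<sigma>"
    using grp closed by unfold_locales blast+
  have "(c, f) \<in> sdom G \<sigma>"
    using \<open>\<sigma> c f \<noteq> 0\<close> composableD[OF cf] by (simp add: sdom_def)
  then have pairs: "{d c, c, i f} \<times> {d c, i c, f} \<subseteq> sdom G \<sigma>"
    using product_pairs_mem cf by blast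
  have a: "a \<in> G" using composableD[OF ab] by simp
  have "i a \<in> {d c, i c, f}" using sub by blast
  then have "a \<in> i ` {d c, i c, f}" using inv_inv[OF a] by (metis image_eqI)
  moreover have "c \<in> G" and "r f = d c" using composableD[OF cf] by simp_all
  ultimately have "a \<in> {d c, c, i f}" by (simp add: inv_d inv_inv)
  moreover have "b \<in> {d c, i c, f}" using sub by blast
  ultimately have "(a, b) \<in> sdom G \<sigma>" using pairs by blast
  then show False using zero by (simp add: sdom_def)
qed

end
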